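(* Let $T$ be a rooted binary phylogenetic tree with leaf set $X$ under the $N_2$ model. Then $$RA_{\rm MP}(T)\ge 1-p_{\max},\qquad p_{\max}=\max\{p(x):x\in X\}.$$
   Context: A rooted binary phylogenetic tree is a finite tree with a distinguished root vertex $\rho$, all edges directed away from $\rho$, in which $\rho$ has out-degree 2 (or 1), and every other vertex has in-degree 1 and out-degree 0 or 2; out-degree-0 vertices are leaves, forming the leaf set $X$. Under the Neyman 2-state model $N_2$ on a state set $\mathcal A$ with $|\mathcal A|=2$, each edge $e$ carries a substitution probability $p_e\in[0,\frac12]$; given the root state $F(\rho)$, states propagate independently along edges: for an edge $(u,v)$, $F(v)=F(u)$ with probability $1-p_e$ and $F(v)$ is the other state otherwise. The character is $f=F|_X$, and $p(v)$ is the probability that $F(v)\ne F(\rho)$. Fitch sets: each leaf $x$ gets $\{f(x)\}$; a vertex with children $v_1,v_2$ gets $\mathrm{FS}(v_1)\cap\mathrm{FS}(v_2)$ if nonempty, else $\mathrm{FS}(v_1)\cup\mathrm{FS}(v_2)$; a vertex with one child gets its child's set. $\mathrm{MP}(f,T)$ is a uniformly random state from $\mathrm{FS}(\rho)$, and $RA_{\rm MP}(T)=\mathbb P(\mathrm{MP}(f,T)=\alpha\mid F(\rho)=\alpha)$. *)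

theory Defs
  imports "HOL-Probability.Probability"
begin

text \<open>Subtrees below a non-root vertex. A vertex is a leaf (labelled by an element of X)
  or has out-degree 2; each of the two outgoing edges carries its substitution
  probability p_e (first the probability on the edge, then the child subtree).\<close>
datatype 'l ptree = Leaf 'l | Node real "'l ptree" real "'l ptree"

datatype 'l phylo = Root1 real "'l ptree" | Root2 real "'l ptree" real "'l ptree"

primrec leaves :: "'l ptree \<Rightarrow> 'l list" where
  "leaves (Leaf x) = [x]"
| "leaves (Node p1 t1 p2 t2) = leaves t1 @ leaves t2"

primrec edge_probs :: "'l ptree \<Rightarrow> real list" where
  "edge_probs (Leaf x) = []"
| "edge_probs (Node p1 t1 p2 t2) = p1 # p2 # edge_probs t1 @ edge_probs t2"

fun phylo_leaves :: "'l phylo \<Rightarrow> 'l list" where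
  "phylo_leaves (Root1 p t) = leaves t"
| "phylo_leaves (Root2 p1 t1 p2 t2) = leaves t1 @ leaves t2"

fun phylo_edge_probs :: "'l phylo \<Rightarrow> real list" where
  "phylo_edge_probs (Root1 p t) = p # edge_probs t"
| "phylo_edge_probs (Root2 p1 t1 p2 t2) = p1 # p2 # edge_probs t1 @ edge_probs t2"

definition wf_N2 :: "'l phylo \<Rightarrow> bool" where
  "wf_N2 T \<longleftrightarrow> distinct (phylo_leaves T) \<and>
     (\<forall>p \<in> set (phylo_edge_probs T). 0 \<le> p \<and> p \<le> 1/2)"

definition edge_step :: "bool \<Rightarrow> real \<Rightarrow> bool pmf" where
  "edge_step a p = map_pmf (\<lambda>c. if c then \<not> a else a) (bernoulli_pmf p)"

primrec evolve :: "bool \<Rightarrow> 'l ptree \<Rightarrow> ('l \<Rightarrow> bool) pmf" where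
  "evolve a (Leaf x) = return_pmf (\<lambda>y. a)"
| "evolve a (Node p1 t1 p2 t2) =
     do { b1 \<leftarrow> edge_step a p1; f1 \<leftarrow> evolve b1 t1;
          b2 \<leftarrow> edge_step a p2; f2 \<leftarrow> evolve b2 t2;
          return_pmf (\<lambda>x. if x \<in> set (leaves t1) then f1 x else f2 x) }"

fun character :: "bool \<Rightarrow> 'l phylo \<Rightarrow> ('l \<Rightarrow> bool) pmf" where
  "character a (Root1 p t) = do { b \<leftarrow> edge_step a p; evolve b t }"
| "character a (Root2 p1 t1 p2 t2) =
     do { b1 \<leftarrow> edge_step a p1; f1 \<leftarrow> evolve b1 t1;
          b2 \<leftarrow> edge_step a p2; f2 \<leftarrow> evolve b2 t2;
          return_pmf (\<lambda>x. if x \<in> set (leaves t1) then f1 x else f2 x) }"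

definition fitch_comb :: "bool set \<Rightarrow> bool set \<Rightarrow> bool set" where
  "fitch_comb A B = (if A \<inter> B \<noteq> {} then A \<inter> B else A \<union> B)"

primrec fitch :: "('l \<Rightarrow> bool) \<Rightarrow> 'l ptree \<Rightarrow> bool set" where
  "fitch f (Leaf x) = {f x}"
| "fitch f (Node p1 t1 p2 t2) = fitch_comb (fitch f t1) (fitch f t2)"

fun fitch_root :: "('l \<Rightarrow> bool) \<Rightarrow> 'l phylo \<Rightarrow> bool set" where
  "fitch_root f (Root1 p t) = fitch f t"
| "fitch_root f (Root2 p1 t1 p2 t2) = fitch_comb (fitch f t1) (fitch f t2)"

text \<open>RA_MP(T) = P(MP(f,T) = alpha | F(rho) = alpha), MP(f,T) uniform on FS(rho).\<close>
definition RA_MP :: "bool \<Rightarrow> 'l phylo \<Rightarrow> real" where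
  "RA_MP \<alpha> T = measure_pmf.prob
     (do { f \<leftarrow> character \<alpha> T; pmf_of_set (fitch_root f T) }) {\<alpha>}"

definition p_leaf :: "bool \<Rightarrow> 'l phylo \<Rightarrow> 'l \<Rightarrow> real" where
  "p_leaf \<alpha> T x = measure_pmf.prob (character \<alpha> T) {f. f x \<noteq> \<alpha>}"

end

theory Submission
  imports Defs
begin

text \<open>Since the model is invariant under swapping the two states, the distribution of the
  Fitch set of a subtree with top state a lives on {a}, {\<not>a} and UNIV, and only its bias
  P(FS = {a}) - P(FS = {\<not>a}) matters: MP returns a with probability (1 + bias)/2, whereas a leaf x
  keeps the top state with probability (1 + w x)/2, where w x is the product of the factors
  1 - 2 p_e along the path to x. An edge multiplies the bias by 1 - 2 p_e, and at an internal
  vertex the bias is a combination of the (edge-damped) biases of the two children with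
  nonnegative weights summing to at least 1. By induction the bias dominates w x for some leaf x,
  which is the claim.\<close>

lemma fitch_cong: "(\<And>x. x \<in> set (leaves t) \<Longrightarrow> f x = g x) \<Longrightarrow> fitch f t = fitch g t"
  by (induction t) auto

lemma fitch_nonempty: "fitch f t \<noteq> {}"
  by (induction t) (auto simp: fitch_comb_def)

lemma fitch_comb_image_inj:
  "inj h \<Longrightarrow> fitch_comb (h ` A) (h ` B) = h ` fitch_comb A B"
  by (simp add: fitch_comb_def image_Int[symmetric] image_Un)

lemma fitch_compose_inj: "inj h \<Longrightarrow> fitch (h \<circ> f) t = h ` fitch f t"
  by (induction t) (simp_all add: fitch_comb_image_inj)

lemma edge_step_Not: "edge_step (\<not> a) p = map_pmf Not (edge_step a p)"
  unfolding edge_step_def map_pmf_comp by (rule map_pmf_cong) auto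

lemma evolve_Not: "evolve (\<not> a) t = map_pmf ((\<circ>) Not) (evolve a t)"
proof (induction t arbitrary: a)
  case (Leaf x)
  then show ?case by (simp add: o_def)
next
  case (Node p1 t1 p2 t2)
  show ?case
    by (simp add: edge_step_Not bind_map_pmf Node.IH map_bind_pmf map_pmf_def[of _ "evolve _ _"]
        bind_assoc_pmf bind_return_pmf o_def)
qed

definition fitch_dist :: "bool \<Rightarrow> 'l ptree \<Rightarrow> bool set pmf" where
  "fitch_dist a t = map_pmf (\<lambda>f. fitch f t) (evolve a t)"

definition edge_fitch_dist :: "bool \<Rightarrow> real \<Rightarrow> 'l ptree \<Rightarrow> bool set pmf" where
  "edge_fitch_dist a p t = edge_step a p \<bind> (\<lambda>b. fitch_dist b t)"

definition bias :: "bool set pmf \<Rightarrow> bool \<Rightarrow> real" where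
  "bias X a = pmf X {a} - pmf X {\<not> a}"

lemma pmf_fitch_dist_empty: "pmf (fitch_dist a t) {} = 0"
  unfolding fitch_dist_def by (rule pmf_map_outside) (use fitch_nonempty in auto)

lemma fitch_dist_Not: "fitch_dist (\<not> a) t = map_pmf ((`) Not) (fitch_dist a t)"
proof -
  have "inj Not" by (simp add: inj_def)
  then show ?thesis
    unfolding fitch_dist_def evolve_Not map_pmf_comp by (simp add: fitch_compose_inj)
qed

lemma pmf_fitch_dist_Not: "pmf (fitch_dist (\<not> a) t) (Not ` S) = pmf (fitch_dist a t) S"
  unfolding fitch_dist_Not by (rule pmf_map_inj') (simp add: inj_def inj_image_eq_iff)

lemma pmf_edge_step_bind:
  assumes "0 \<le> p" "p \<le> 1"
  shows "pmf (edge_step a p \<bind> M) x = (1 - p) * pmf (M a) x + p * pmf (M (\<not> a)) x"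
  using assms by (simp add: edge_step_def bind_map_pmf pmf_bind)

lemma pmf_edge_fitch_dist_empty:
  "0 \<le> p \<Longrightarrow> p \<le> 1 \<Longrightarrow> pmf (edge_fitch_dist a p t) {} = 0"
  by (simp add: edge_fitch_dist_def pmf_edge_step_bind pmf_fitch_dist_empty)

lemma bias_edge_fitch_dist:
  assumes "0 \<le> p" "p \<le> 1"
  shows "bias (edge_fitch_dist a p t) a = (1 - 2 * p) * bias (fitch_dist a t) a"
proof -
  have "pmf (fitch_dist (\<not> a) t) {b} = pmf (fitch_dist a t) {\<not> b}" for b
    using pmf_fitch_dist_Not[of a t "{\<not> b}"] by simp
  then show ?thesis
    using assms by (simp add: bias_def edge_fitch_dist_def pmf_edge_step_bind algebra_simps)
qed

lemma fitch_dist_Node: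
  assumes "distinct (leaves (Node p1 t1 p2 t2))"
  shows "fitch_dist a (Node p1 t1 p2 t2) =
    map_pmf (case_prod fitch_comb) (pair_pmf (edge_fitch_dist a p1 t1) (edge_fitch_dist a p2 t2))"
proof -
  have "fitch (\<lambda>x. if x \<in> set (leaves t1) then f1 x else f2 x) t1 = fitch f1 t1"
    and "fitch (\<lambda>x. if x \<in> set (leaves t1) then f1 x else f2 x) t2 = fitch f2 t2" for f1 f2
    using assms by (auto intro!: fitch_cong)
  then show ?thesis
    unfolding fitch_dist_def edge_fitch_dist_def pair_pmf_def
    by (simp add: map_pmf_def bind_assoc_pmf bind_return_pmf)
qed

lemma UNIV_bool_set: "(UNIV :: bool set set) = {{}, {True}, {False}, {False, True}}"
proof -
  have "(UNIV :: bool set set) = Pow {False, True}" by (simp add: UNIV_bool[symmetric])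
  then show ?thesis by (auto simp: Pow_insert)
qed

lemma pmf_map_finite:
  fixes M :: "'a::finite pmf"
  shows "pmf (map_pmf g M) z = (\<Sum>x\<in>UNIV. if g x = z then pmf M x else 0)"
  by (simp add: pmf_map measure_measure_pmf_finite sum.If_cases vimage_def)

lemma pmf_bool_set_total:
  fixes X :: "bool set pmf"
  assumes "pmf X {} = 0"
  shows "pmf X {a} + pmf X {\<not> a} + pmf X UNIV = 1"
proof -
  have "sum (pmf X) UNIV = 1" by (rule sum_pmf_eq_1) auto
  then show ?thesis using assms by (cases a) (simp_all add: UNIV_bool_set UNIV_bool insert_commute)
qed

lemma bias_fitch_comb:
  fixes X Y :: "bool set pmf"
  assumes "pmf X {} = 0" "pmf Y {} = 0"
  shows "bias (map_pmf (case_prod fitch_comb) (pair_pmf X Y)) a =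
    bias X a * (1 + pmf Y UNIV) / 2 + bias Y a * (1 + pmf X UNIV) / 2"
proof -
  have comb: "pmf (map_pmf (case_prod fitch_comb) (pair_pmf X Y)) {b} =
      pmf X {b} * pmf Y {b} + pmf X {b} * pmf Y UNIV + pmf X UNIV * pmf Y {b}" for b
    using assms
    by (cases b) (simp_all add: pmf_map_finite UNIV_Times_UNIV[symmetric]
        sum.cartesian_product[symmetric] UNIV_bool_set UNIV_bool fitch_comb_def pmf_pair insert_commute)
  have total: "pmf X UNIV = 1 - pmf X {a} - pmf X {\<not> a}"
    "pmf Y UNIV = 1 - pmf Y {a} - pmf Y {\<not> a}"
    using pmf_bool_set_total[OF assms(1), of a] pmf_bool_set_total[OF assms(2), of a] by simp_all
  show ?thesis
    unfolding bias_def comb total by (simp add: field_simps)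
qed

definition wf_ptree :: "'l ptree \<Rightarrow> bool" where
  "wf_ptree t \<longleftrightarrow> distinct (leaves t) \<and> (\<forall>p \<in> set (edge_probs t). 0 \<le> p \<and> p \<le> 1/2)"

lemma wf_ptree_Node [simp]:
  "wf_ptree (Node p1 t1 p2 t2) \<longleftrightarrow> wf_ptree t1 \<and> wf_ptree t2 \<and>
     0 \<le> p1 \<and> p1 \<le> 1/2 \<and> 0 \<le> p2 \<and> p2 \<le> 1/2 \<and> set (leaves t1) \<inter> set (leaves t2) = {}"
  by (auto simp: wf_ptree_def)

primrec path_weight :: "'l ptree \<Rightarrow> 'l \<Rightarrow> real" where
  "path_weight (Leaf y) x = 1"
| "path_weight (Node p1 t1 p2 t2) x =
     (if x \<in> set (leaves t1) then (1 - 2 * p1) * path_weight t1 x else (1 - 2 * p2) * path_weight t2 x)"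

lemma path_weight_nonneg: "wf_ptree t \<Longrightarrow> 0 \<le> path_weight t x"
  by (induction t) auto

lemma pmf_edge_step_bind_Not:
  fixes M :: "bool \<Rightarrow> bool pmf"
  assumes "\<And>b. pmf (M b) (\<not> b) = (1 - w) / 2" "0 \<le> p" "p \<le> 1"
  shows "pmf (edge_step a p \<bind> M) (\<not> a) = (1 - (1 - 2 * p) * w) / 2"
proof -
  have "pmf (M (\<not> a)) (\<not> a) = 1 - pmf (M (\<not> a)) a"
    by (cases a) (simp_all add: pmf_False_conv_True)
  also have "\<dots> = (1 + w) / 2"
    using assms(1)[of "\<not> a"] by simp
  finally have "pmf (M (\<not> a)) (\<not> a) = (1 + w) / 2" .
  then show ?thesis
    unfolding pmf_edge_step_bind[OF assms(2,3)] assms(1)[of a] by (simp add: field_simps)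
qed

lemma pmf_evolve_leaf_Not:
  assumes "wf_ptree t" "x \<in> set (leaves t)"
  shows "pmf (map_pmf (\<lambda>f. f x) (evolve a t)) (\<not> a) = (1 - path_weight t x) / 2"
  using assms
proof (induction t arbitrary: a)
  case (Leaf y)
  then show ?case by simp
next
  case (Node p1 t1 p2 t2)
  have "map_pmf (\<lambda>f. f x) (evolve a (Node p1 t1 p2 t2)) =
    (if x \<in> set (leaves t1) then edge_step a p1 \<bind> (\<lambda>b. map_pmf (\<lambda>f. f x) (evolve b t1))
     else edge_step a p2 \<bind> (\<lambda>b. map_pmf (\<lambda>f. f x) (evolve b t2)))"
    by (simp add: map_pmf_def bind_assoc_pmf bind_return_pmf)
  moreover have "x \<notin> set (leaves t1) \<Longrightarrow> x \<in> set (leaves t2)"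
    using Node.prems by auto
  ultimately show ?case
    using Node by (simp add: pmf_edge_step_bind_Not)
qed

lemma path_weight_le_bias:
  assumes "wf_ptree t"
  shows "\<exists>u \<in> set (leaves t). path_weight t u \<le> bias (fitch_dist a t) a"
  using assms
proof (induction t)
  case (Leaf y)
  have "{a} \<noteq> {\<not> a}" by auto
  then show ?case by (simp add: bias_def fitch_dist_def)
next
  case (Node p1 t1 p2 t2)
  let ?t = "Node p1 t1 p2 t2"
  define e1 where "e1 = bias (edge_fitch_dist a p1 t1) a"
  define e2 where "e2 = bias (edge_fitch_dist a p2 t2) a"
  obtain u1 where u1: "u1 \<in> set (leaves t1)" "path_weight t1 u1 \<le> bias (fitch_dist a t1) a"
    using Node by auto
  obtain u2 where u2: "u2 \<in> set (leaves t2)" "path_weight t2 u2 \<le> bias (fitch_dist a t2) a"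
    using Node by auto
  have "u2 \<notin> set (leaves t1)"
    using u2 Node.prems by auto
  then have w1: "path_weight ?t u1 \<le> e1" and w2: "path_weight ?t u2 \<le> e2"
    using u1 u2 Node.prems by (simp_all add: e1_def e2_def bias_edge_fitch_dist mult_left_mono)
  define c1 where "c1 = (1 + pmf (edge_fitch_dist a p1 t1) UNIV) / 2"
  define c2 where "c2 = (1 + pmf (edge_fitch_dist a p2 t2) UNIV) / 2"
  have "0 \<le> min e1 e2"
    using w1 w2 path_weight_nonneg[OF Node.prems] by (meson order_trans min.boundedI)
  moreover have "1 \<le> c1 + c2" "0 \<le> c1" "0 \<le> c2"
    unfolding c1_def c2_def
    using pmf_nonneg[of "edge_fitch_dist a p1 t1" UNIV] pmf_nonneg[of "edge_fitch_dist a p2 t2" UNIV]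
    by (simp_all add: add_divide_distrib)
  ultimately have "min e1 e2 \<le> min e1 e2 * c2 + min e1 e2 * c1"
    using mult_left_mono[of 1 "c1 + c2" "min e1 e2"] by (simp add: algebra_simps)
  also have "\<dots> \<le> e1 * c2 + e2 * c1"
    using \<open>0 \<le> c1\<close> \<open>0 \<le> c2\<close> by (intro add_mono mult_right_mono) auto
  also have "\<dots> = bias (fitch_dist a ?t) a"
    using Node.prems
    by (simp add: fitch_dist_Node e1_def e2_def c1_def c2_def bias_fitch_comb
        pmf_edge_fitch_dist_empty wf_ptree_def)
  finally have "min e1 e2 \<le> bias (fitch_dist a ?t) a" .
  then consider "path_weight ?t u1 \<le> bias (fitch_dist a ?t) a"
    | "path_weight ?t u2 \<le> bias (fitch_dist a ?t) a"
    using w1 w2 by (meson min_le_iff_disj order_trans)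
  then show ?case
    using u1(1) u2(1) by cases (auto simp del: path_weight.simps)
qed

lemma pmf_bind_pmf_of_set_bias:
  fixes X :: "bool set pmf"
  assumes "pmf X {} = 0"
  shows "pmf (X \<bind> pmf_of_set) a = (1 + bias X a) / 2"
proof -
  have "pmf (X \<bind> pmf_of_set) a = (\<Sum>S\<in>UNIV. pmf (pmf_of_set S) a * pmf X S)"
    unfolding pmf_bind by (rule integral_measure_pmf_real) simp_all
  also have "\<dots> = pmf X {a} + pmf X UNIV / 2"
    using assms by (cases a) (simp_all add: UNIV_bool_set UNIV_bool insert_commute)
  finally show ?thesis
    using pmf_bool_set_total[OF assms, of a] by (simp add: bias_def field_simps)
qed

lemma edge_step_0_bind: "edge_step a 0 \<bind> M = M a"
  by (rule pmf_eqI) (simp add: pmf_edge_step_bind)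

text \<open>A root of out-degree 2 behaves like one of out-degree 1 above an edge with p_e = 0.\<close>

lemma phylo_as_edge:
  assumes "wf_N2 T"
  obtains q t where "0 \<le> q" "q \<le> 1/2" "wf_ptree t" "set (phylo_leaves T) = set (leaves t)"
    "\<And>a. character a T = edge_step a q \<bind> (\<lambda>b. evolve b t)" "\<And>f. fitch_root f T = fitch f t"
proof (cases T)
  case (Root1 p t)
  then show thesis
    using assms that[of p t] by (simp add: wf_N2_def wf_ptree_def)
next
  case (Root2 p1 t1 p2 t2)
  then show thesis
    using assms that[of 0 "Node p1 t1 p2 t2"] by (simp add: wf_N2_def wf_ptree_def edge_step_0_bind)
qed

lemma RA_MP_ge_leaf:
  assumes "wf_N2 T"
  shows "\<exists>x \<in> set (phylo_leaves T). 1 - p_leaf a T x \<le> RA_MP a T"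
proof -
  obtain q t where q: "0 \<le> q" "q \<le> 1/2" and t: "wf_ptree t"
    and leaves_T: "set (phylo_leaves T) = set (leaves t)"
    and character_T: "\<And>a. character a T = edge_step a q \<bind> (\<lambda>b. evolve b t)"
    and fitch_T: "\<And>f. fitch_root f T = fitch f t"
    using phylo_as_edge[OF assms] by metis
  obtain u where u: "u \<in> set (leaves t)" "path_weight t u \<le> bias (fitch_dist a t) a"
    using path_weight_le_bias[OF t] by blast
  have root_dist: "map_pmf (\<lambda>f. fitch_root f T) (character a T) = edge_fitch_dist a q t"
    by (simp add: character_T fitch_T map_bind_pmf edge_fitch_dist_def fitch_dist_def)
  have "RA_MP a T = pmf (edge_fitch_dist a q t \<bind> pmf_of_set) a"
    unfolding RA_MP_def root_dist[symmetric] bind_map_pmf by (simp add: measure_pmf_single)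
  also have "\<dots> = (1 + (1 - 2 * q) * bias (fitch_dist a t) a) / 2"
    using q by (simp add: pmf_bind_pmf_of_set_bias pmf_edge_fitch_dist_empty bias_edge_fitch_dist)
  finally have RA: "RA_MP a T = (1 + (1 - 2 * q) * bias (fitch_dist a t) a) / 2" .
  have "p_leaf a T u = pmf (map_pmf (\<lambda>f. f u) (character a T)) (\<not> a)"
    unfolding p_leaf_def pmf_map by (rule arg_cong[where f = "measure_pmf.prob _"]) auto
  also have "\<dots> = (1 - (1 - 2 * q) * path_weight t u) / 2"
    using q
    by (simp add: character_T map_bind_pmf pmf_edge_step_bind_Not pmf_evolve_leaf_Not[OF t u(1)])
  finally have "1 - p_leaf a T u = (1 + (1 - 2 * q) * path_weight t u) / 2"
    by simp
  also have "\<dots> \<le> RA_MP a T"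
    unfolding RA using q u(2) by (simp add: mult_left_mono)
  finally show ?thesis
    using u(1) leaves_T by auto
qed

theorem corollary1:
  fixes T :: "'l phylo" and \<alpha> :: bool
  assumes "wf_N2 T"
  shows "RA_MP \<alpha> T \<ge> 1 - Max (p_leaf \<alpha> T ` set (phylo_leaves T))"
proof -
  obtain x where x: "x \<in> set (phylo_leaves T)" "1 - p_leaf \<alpha> T x \<le> RA_MP \<alpha> T"
    using RA_MP_ge_leaf[OF assms] by blast
  have "p_leaf \<alpha> T x \<le> Max (p_leaf \<alpha> T ` set (phylo_leaves T))"
    using x(1) by (intro Max_ge) auto
  then show ?thesis
    using x(2) by linarith
qed

end
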